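(* Let $R$ be a unital ring and $E$ a directed graph. If for some integer $t\ge 0$ one has $C_{t+1}\subseteq\bigcup_{m=0}^{t}C_m$, then $\bigcup_{m=0}^{\infty}C_m=\bigcup_{m=0}^{t}C_m$.
   Context: A directed graph $E=(E^0,E^1,s,r)$ has vertex set $E^0$, edge set $E^1$, source and range maps $s,r$. A path is a sequence of edges $f_1\cdots f_n$ with $s(f_{i+1})=r(f_i)$, of length $\mathrm{len}=n$ (vertices are paths of length 0). $L_R(E)$ is the $R$-algebra generated by $v\in E^0$, $f,f^*$ ($f\in E^1$), with $R$ commuting with generators, subject to $v_iv_j=\delta_{i,j}v_i$; $s(f)f=fr(f)=f$, $r(f)f^*=f^*s(f)=f^*$; $f^*f'=\delta_{f,f'}r(f)$; and $\sum_{s(f)=v}ff^*=v$ whenever $s^{-1}(v)$ is nonempty and finite. For a path $\alpha=f_1\cdots f_n$, $\alpha^*=f_n^*\cdots f_1^*$. For $m\ge 0$, $C_m=\mathrm{Span}_R\{\alpha\beta^*:\alpha,\beta\text{ paths},\ \mathrm{len}(\alpha)=\mathrm{len}(\beta)=m\}\subseteq L_R(E)$. *)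

theory Defs
  imports "HOL-Library.Poly_Mapping" "Graph_Theory.Digraph" "Graph_Theory.Arc_Walk"
begin

text \<open>Generators of the Leavitt path algebra: vertices, real edges, ghost edges.\<close>
datatype ('v, 'e) lgen = LV 'v | LE 'e | LG 'e

text \<open>We wrap lists so that the monoid is written additively, as required by the
  monoid-ring construction of HOL-Library.Poly_Mapping.\<close>
datatype 'a word = Word "'a list"

instantiation word :: (type) monoid_add
begin
definition zero_word_def: "0 = Word []"
fun plus_word where "plus_word (Word xs) (Word ys) = Word (xs @ ys)"
instance
proof
  fix a b c :: "'a word"
  show "a + b + c = a + (b + c)" by (cases a; cases b; cases c) simp
  show "0 + a = a" by (cases a) (simp add: zero_word_def)
  show "a + 0 = a" by (cases a) (simp add: zero_word_def)
qed
end

text \<open>The free R-algebra R<X> on the generators (R commuting with generators) is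
  the monoid ring R[X*] of finitely supported functions words => R.\<close>
type_synonym ('r, 'v, 'e) freealg = "(('v, 'e) lgen word \<Rightarrow>\<^sub>0 'r)"

definition gm :: "('v, 'e) lgen \<Rightarrow> ('r::ring_1, 'v, 'e) freealg" where
  "gm g = Poly_Mapping.single (Word [g]) 1"

definition scal :: "'r::ring_1 \<Rightarrow> ('r, 'v, 'e) freealg" where
  "scal c = Poly_Mapping.single 0 c"

text \<open>The defining relations of L_R(E), each written as (lhs - rhs).  Generators
  not belonging to the graph are killed, so that the quotient is exactly L_R(E).\<close>
inductive_set leavitt_rels :: "('v, 'e) pre_digraph \<Rightarrow> ('r::ring_1, 'v, 'e) freealg set"
  for G where
  nonvert: "v \<notin> verts G \<Longrightarrow> gm (LV v) \<in> leavitt_rels G"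
| nonedge1: "e \<notin> arcs G \<Longrightarrow> gm (LE e) \<in> leavitt_rels G"
| nonedge2: "e \<notin> arcs G \<Longrightarrow> gm (LG e) \<in> leavitt_rels G"
| vv: "v \<in> verts G \<Longrightarrow> w \<in> verts G \<Longrightarrow>
      gm (LV v) * gm (LV w) - (if v = w then gm (LV v) else 0) \<in> leavitt_rels G"
| se: "e \<in> arcs G \<Longrightarrow> gm (LV (tail G e)) * gm (LE e) - gm (LE e) \<in> leavitt_rels G"
| er: "e \<in> arcs G \<Longrightarrow> gm (LE e) * gm (LV (head G e)) - gm (LE e) \<in> leavitt_rels G"
| rg: "e \<in> arcs G \<Longrightarrow> gm (LV (head G e)) * gm (LG e) - gm (LG e) \<in> leavitt_rels G"
| gs: "e \<in> arcs G \<Longrightarrow> gm (LG e) * gm (LV (tail G e)) - gm (LG e) \<in> leavitt_rels G"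
| ck1: "e \<in> arcs G \<Longrightarrow> f \<in> arcs G \<Longrightarrow>
      gm (LG e) * gm (LE f) - (if e = f then gm (LV (head G e)) else 0) \<in> leavitt_rels G"
| ck2: "v \<in> verts G \<Longrightarrow> {e \<in> arcs G. tail G e = v} \<noteq> {} \<Longrightarrow>
      finite {e \<in> arcs G. tail G e = v} \<Longrightarrow>
      (\<Sum>e\<in>{e \<in> arcs G. tail G e = v}. gm (LE e) * gm (LG e)) - gm (LV v) \<in> leavitt_rels G"

inductive_set leavitt_ideal :: "('v, 'e) pre_digraph \<Rightarrow> ('r::ring_1, 'v, 'e) freealg set"
  for G where
  zero: "0 \<in> leavitt_ideal G"
| add: "x \<in> leavitt_rels G \<Longrightarrow> y \<in> leavitt_ideal G \<Longrightarrow> a * x * b + y \<in> leavitt_ideal G"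

text \<open>Path monomials: a path is an arc walk u p v of the digraph (length 0 walks
  are the vertices).  alpha and alpha^* as elements of the free algebra.\<close>
definition path_mon :: "'v \<Rightarrow> 'e list \<Rightarrow> ('r::ring_1, 'v, 'e) freealg" where
  "path_mon u p = (if p = [] then gm (LV u) else Poly_Mapping.single (Word (map LE p)) 1)"

definition path_star :: "'v \<Rightarrow> 'e list \<Rightarrow> ('r::ring_1, 'v, 'e) freealg" where
  "path_star u p = (if p = [] then gm (LV u) else Poly_Mapping.single (Word (rev (map LG p))) 1)"

text \<open>Representatives (in the free algebra) of elements of C_m = Span_R{alpha beta^*}.\<close>
inductive_set Cspan :: "('v, 'e) pre_digraph \<Rightarrow> nat \<Rightarrow> ('r::ring_1, 'v, 'e) freealg set"
  for G m where
  zero: "0 \<in> Cspan G m"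
| add: "pre_digraph.awalk G u1 a v1 \<Longrightarrow> pre_digraph.awalk G u2 b v2 \<Longrightarrow>
        length a = m \<Longrightarrow> length b = m \<Longrightarrow> y \<in> Cspan G m \<Longrightarrow>
        scal c * path_mon u1 a * path_star u2 b + y \<in> Cspan G m"

text \<open>The class of x in L_R(E) = free algebra / ideal lies in C_m.\<close>
definition inC :: "('v, 'e) pre_digraph \<Rightarrow> nat \<Rightarrow> ('r::ring_1, 'v, 'e) freealg \<Rightarrow> bool" where
  "inC G m x \<longleftrightarrow> (\<exists>y \<in> Cspan G m. x - y \<in> leavitt_ideal G)"

end

theory Submission
  imports Defs
begin

(* Write E_F for the sum of e e^* over a finite set F of edges.  If F contains the first edges
   of the paths occurring in a representative of x \<in> C_(k+1), then E_F x E_F = x, because e^* e'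
   is r(e) or 0.  Expanding, x is the sum of e (e^* x f) f^* over e, f \<in> F, while e^* C_k f \<subseteq> C_(k-1)
   and e C_k f^* \<subseteq> C_(k+1).  So x \<in> C_(k+1) lies in C_(j+1) as soon as every e^* x f lies in C_j.
   Induction on the levels then gives C_m \<inter> C_n \<subseteq> C_j for m \<le> j \<le> n, so the hypothesis yields
   C_(t+1) \<subseteq> C_t, and shows that C_(k+1) \<subseteq> C_k implies C_(k+2) \<subseteq> C_(k+1); hence C_n \<subseteq> C_t
   for all n \<ge> t. *)

section \<open>Congruence modulo the Leavitt relations\<close>

lemma leavitt_rels_subset_ideal: "x \<in> leavitt_rels G \<Longrightarrow> x \<in> leavitt_ideal G"
  using leavitt_ideal.add[OF _ leavitt_ideal.zero, of x G 1 1] by simp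

lemma leavitt_ideal_add: "x \<in> leavitt_ideal G \<Longrightarrow> y \<in> leavitt_ideal G \<Longrightarrow> x + y \<in> leavitt_ideal G"
  by (induction x rule: leavitt_ideal.induct) (auto simp: add.assoc intro: leavitt_ideal.add)

lemma leavitt_ideal_mult_left: "x \<in> leavitt_ideal G \<Longrightarrow> c * x \<in> leavitt_ideal G"
proof (induction x rule: leavitt_ideal.induct)
  case (add x y a b)
  have "c * (a * x * b + y) = (c * a) * x * b + c * y" by (simp add: algebra_simps)
  with add show ?case by (metis leavitt_ideal.add)
qed (simp add: leavitt_ideal.zero)

lemma leavitt_ideal_mult_right: "x \<in> leavitt_ideal G \<Longrightarrow> x * c \<in> leavitt_ideal G"
proof (induction x rule: leavitt_ideal.induct)
  case (add x y a b)
  have "(a * x * b + y) * c = a * x * (b * c) + y * c" by (simp add: algebra_simps)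
  with add show ?case by (metis leavitt_ideal.add)
qed (simp add: leavitt_ideal.zero)

lemma leavitt_ideal_uminus: "x \<in> leavitt_ideal G \<Longrightarrow> - x \<in> leavitt_ideal G"
  using leavitt_ideal_mult_left[of x G "-1"] by simp

definition leavitt_eq ::
    "('v, 'e) pre_digraph \<Rightarrow> ('r::ring_1, 'v, 'e) freealg \<Rightarrow> ('r, 'v, 'e) freealg \<Rightarrow> bool" where
  "leavitt_eq G x y \<longleftrightarrow> x - y \<in> leavitt_ideal G"

lemma leavitt_eq_refl [simp]: "leavitt_eq G x x"
  by (simp add: leavitt_eq_def leavitt_ideal.zero)

lemma leavitt_eq_sym: "leavitt_eq G x y \<Longrightarrow> leavitt_eq G y x"
  unfolding leavitt_eq_def using leavitt_ideal_uminus[of "x - y" G] by simp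

lemma leavitt_eq_trans [trans]: "leavitt_eq G x y \<Longrightarrow> leavitt_eq G y z \<Longrightarrow> leavitt_eq G x z"
  unfolding leavitt_eq_def using leavitt_ideal_add[of "x - y" G "y - z"] by simp

lemma leavitt_eq_add: "leavitt_eq G x x' \<Longrightarrow> leavitt_eq G y y' \<Longrightarrow> leavitt_eq G (x + y) (x' + y')"
  unfolding leavitt_eq_def using leavitt_ideal_add[of "x - x'" G "y - y'"] by (simp add: algebra_simps)

lemma leavitt_eq_mult:
  assumes "leavitt_eq G x x'" and "leavitt_eq G y y'"
  shows "leavitt_eq G (x * y) (x' * y')"
proof -
  have "x * y - x' * y' = (x - x') * y + x' * (y - y')" by (simp add: algebra_simps)
  with assms show ?thesis
    unfolding leavitt_eq_def by (metis leavitt_ideal_add leavitt_ideal_mult_left leavitt_ideal_mult_right)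
qed

lemma leavitt_eq_mult_left: "leavitt_eq G y y' \<Longrightarrow> leavitt_eq G (x * y) (x * y')"
  by (rule leavitt_eq_mult[OF leavitt_eq_refl])

lemma leavitt_eq_mult_right: "leavitt_eq G x x' \<Longrightarrow> leavitt_eq G (x * y) (x' * y)"
  by (rule leavitt_eq_mult[OF _ leavitt_eq_refl])

lemma leavitt_eq_sum: "(\<And>i. i \<in> A \<Longrightarrow> leavitt_eq G (f i) (g i)) \<Longrightarrow> leavitt_eq G (sum f A) (sum g A)"
  by (induction A rule: infinite_finite_induct) (auto intro: leavitt_eq_add)

lemma leavitt_eq_of_rel: "x - y \<in> leavitt_rels G \<Longrightarrow> leavitt_eq G x y"
  unfolding leavitt_eq_def by (rule leavitt_rels_subset_ideal)

section \<open>The levels \<open>C\<^sub>m\<close>\<close>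

lemma scal_mult_single_commute: "scal c * Poly_Mapping.single w 1 = Poly_Mapping.single w 1 * scal c"
  by (simp add: scal_def mult_single)

lemma gm_mult_scal: "gm g * (scal c * x) = scal c * (gm g * x)"
  unfolding gm_def by (simp add: mult.assoc[symmetric] scal_mult_single_commute)

lemma Cspan_add: "x \<in> Cspan G m \<Longrightarrow> y \<in> Cspan G m \<Longrightarrow> x + y \<in> Cspan G m"
  by (induction x rule: Cspan.induct) (auto simp: add.assoc intro: Cspan.add)

lemma inC_zero: "inC G m 0"
  unfolding inC_def by (intro bexI[of _ 0]) (simp_all add: Cspan.zero leavitt_ideal.zero)

lemma inC_add: "inC G m x \<Longrightarrow> inC G m y \<Longrightarrow> inC G m (x + y)"
  unfolding inC_def using Cspan_add leavitt_eq_add[of G x _ y] by (metis leavitt_eq_def)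

lemma inC_sum: "(\<And>i. i \<in> A \<Longrightarrow> inC G m (f i)) \<Longrightarrow> inC G m (sum f A)"
  by (induction A rule: infinite_finite_induct) (auto intro: inC_add inC_zero)

lemma inC_leavitt_eq: "inC G m y \<Longrightarrow> leavitt_eq G x y \<Longrightarrow> inC G m x"
  unfolding inC_def by (metis leavitt_eq_def leavitt_eq_trans)

lemma inC_monomial:
  "pre_digraph.awalk G u1 a v1 \<Longrightarrow> pre_digraph.awalk G u2 b v2 \<Longrightarrow> length a = m \<Longrightarrow> length b = m \<Longrightarrow>
   inC G m (scal c * path_mon u1 a * path_star u2 b)"
  unfolding inC_def using Cspan.add[OF _ _ _ _ Cspan.zero] leavitt_eq_refl
  by (metis add.right_neutral leavitt_eq_def)

lemma inC_scal_mult_if: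
  "(P \<Longrightarrow> Q \<Longrightarrow> inC G m (scal c * x * y)) \<Longrightarrow>
   inC G m (scal c * ((if P then x else 0) * (if Q then y else 0)))"
  by (cases P; cases Q) (auto simp: inC_zero mult.assoc)

lemma inC_mult_both_sides:
  assumes "inC G k x"
    and "\<And>u1 a v1 u2 b v2 c. pre_digraph.awalk G u1 a v1 \<Longrightarrow> pre_digraph.awalk G u2 b v2 \<Longrightarrow>
           length a = k \<Longrightarrow> length b = k \<Longrightarrow>
           inC G j (l * (scal c * path_mon u1 a * path_star u2 b) * r)"
  shows "inC G j (l * x * r)"
proof -
  obtain y where y: "y \<in> Cspan G k" "leavitt_eq G x y"
    using assms(1) unfolding inC_def leavitt_eq_def by blast
  from y(1) have "inC G j (l * y * r)"
  proof (induction rule: Cspan.induct)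
    case (add u1 a v1 u2 b v2 y c)
    then show ?case using assms(2)[of u1 a v1 u2 b v2 c] by (simp add: algebra_simps inC_add)
  qed (simp add: inC_zero)
  moreover have "leavitt_eq G (l * x * r) (l * y * r)"
    using y(2) by (intro leavitt_eq_mult_left leavitt_eq_mult_right)
  ultimately show ?thesis by (rule inC_leavitt_eq)
qed

section \<open>Products of path monomials with edges and ghost edges\<close>

context wf_digraph
begin

lemma vertex_idem:
  assumes "v \<in> verts G"
  shows "leavitt_eq G (gm (LV v) * gm (LV v)) (gm (LV v))"
  using leavitt_eq_of_rel[OF leavitt_rels.vv[OF assms assms]] by simp

lemma vertex_orth_left:
  assumes "v \<in> verts G" "w \<in> verts G" "v \<noteq> w" "leavitt_eq G (gm (LV w) * x) x"
  shows "leavitt_eq G (gm (LV v) * x) 0"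
proof -
  have "leavitt_eq G (gm (LV v) * x) (gm (LV v) * gm (LV w) * x)"
    using leavitt_eq_mult_left[OF leavitt_eq_sym[OF assms(4)]] by (simp add: mult.assoc)
  also have "leavitt_eq G \<dots> (0 * x)"
    using leavitt_eq_of_rel[OF leavitt_rels.vv[OF assms(1,2)]] assms(3) by (intro leavitt_eq_mult_right) simp
  finally show ?thesis by simp
qed

lemma vertex_orth_right:
  assumes "v \<in> verts G" "w \<in> verts G" "v \<noteq> w" "leavitt_eq G (x * gm (LV w)) x"
  shows "leavitt_eq G (x * gm (LV v)) 0"
proof -
  have "leavitt_eq G (x * gm (LV v)) (x * (gm (LV w) * gm (LV v)))"
    using leavitt_eq_mult_right[OF leavitt_eq_sym[OF assms(4)]] by (simp add: mult.assoc)
  also have "leavitt_eq G \<dots> (x * 0)"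
    using leavitt_eq_of_rel[OF leavitt_rels.vv[OF assms(2,1)]] assms(3) by (intro leavitt_eq_mult_left) simp
  finally show ?thesis by simp
qed

lemma vertex_mult_edge:
  assumes "v \<in> verts G" "e \<in> arcs G"
  shows "leavitt_eq G (gm (LV v) * gm (LE e)) (if v = tail G e then gm (LE e) else 0)"
  using leavitt_eq_of_rel[OF leavitt_rels.se[OF assms(2)]]
    vertex_orth_left[OF assms(1) tail_in_verts[OF assms(2)]] by auto

lemma edge_mult_vertex:
  assumes "v \<in> verts G" "e \<in> arcs G"
  shows "leavitt_eq G (gm (LE e) * gm (LV v)) (if v = head G e then gm (LE e) else 0)"
  using leavitt_eq_of_rel[OF leavitt_rels.er[OF assms(2)]]
    vertex_orth_right[OF assms(1) head_in_verts[OF assms(2)]] by auto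

lemma ghost_mult_vertex:
  assumes "v \<in> verts G" "e \<in> arcs G"
  shows "leavitt_eq G (gm (LG e) * gm (LV v)) (if v = tail G e then gm (LG e) else 0)"
  using leavitt_eq_of_rel[OF leavitt_rels.gs[OF assms(2)]]
    vertex_orth_right[OF assms(1) tail_in_verts[OF assms(2)]] by auto

lemma vertex_mult_ghost:
  assumes "v \<in> verts G" "e \<in> arcs G"
  shows "leavitt_eq G (gm (LV v) * gm (LG e)) (if v = head G e then gm (LG e) else 0)"
  using leavitt_eq_of_rel[OF leavitt_rels.rg[OF assms(2)]]
    vertex_orth_left[OF assms(1) head_in_verts[OF assms(2)]] by auto

lemma path_mon_Cons:
  assumes "awalk u (e # p) w"
  shows "leavitt_eq G (path_mon u (e # p)) (gm (LE e) * path_mon (head G e) p)"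
proof (cases p)
  case Nil
  from assms have "e \<in> arcs G" by (simp add: awalk_Cons_iff)
  with Nil show ?thesis using leavitt_eq_sym[OF leavitt_eq_of_rel[OF leavitt_rels.er]]
    by (simp add: path_mon_def gm_def)
qed (simp add: path_mon_def gm_def mult_single)

lemma path_star_Cons:
  assumes "awalk u (e # p) w"
  shows "leavitt_eq G (path_star u (e # p)) (path_star (head G e) p * gm (LG e))"
proof (cases p)
  case Nil
  from assms have "e \<in> arcs G" by (simp add: awalk_Cons_iff)
  with Nil show ?thesis using leavitt_eq_sym[OF leavitt_eq_of_rel[OF leavitt_rels.rg]]
    by (simp add: path_star_def gm_def)
qed (simp add: path_star_def gm_def mult_single)

lemma vertex_mult_path_mon:
  assumes "awalk u p w"
  shows "leavitt_eq G (gm (LV u) * path_mon u p) (path_mon u p)"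
proof (cases p)
  case Nil
  then show ?thesis using vertex_idem[OF awalk_hd_in_verts[OF assms]] by (simp add: path_mon_def)
next
  case (Cons e q)
  with assms have e: "e \<in> arcs G" "u = tail G e" by (auto simp: awalk_Cons_iff)
  have pm: "leavitt_eq G (path_mon u p) (gm (LE e) * path_mon (head G e) q)"
    using assms unfolding Cons by (rule path_mon_Cons)
  have "leavitt_eq G (gm (LV u) * path_mon u p) (gm (LV (tail G e)) * gm (LE e) * path_mon (head G e) q)"
    using leavitt_eq_mult_left[OF pm] e(2) by (simp add: mult.assoc)
  also have "leavitt_eq G \<dots> (gm (LE e) * path_mon (head G e) q)"
    by (rule leavitt_eq_mult_right[OF leavitt_eq_of_rel[OF leavitt_rels.se[OF e(1)]]])
  also have "leavitt_eq G \<dots> (path_mon u p)" by (rule leavitt_eq_sym[OF pm])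
  finally show ?thesis .
qed

lemma path_star_mult_vertex:
  assumes "awalk u p w"
  shows "leavitt_eq G (path_star u p * gm (LV u)) (path_star u p)"
proof (cases p)
  case Nil
  then show ?thesis using vertex_idem[OF awalk_hd_in_verts[OF assms]] by (simp add: path_star_def)
next
  case (Cons e q)
  with assms have e: "e \<in> arcs G" "u = tail G e" by (auto simp: awalk_Cons_iff)
  have ps: "leavitt_eq G (path_star u p) (path_star (head G e) q * gm (LG e))"
    using assms unfolding Cons by (rule path_star_Cons)
  have "leavitt_eq G (path_star u p * gm (LV u)) (path_star (head G e) q * (gm (LG e) * gm (LV (tail G e))))"
    using leavitt_eq_mult_right[OF ps] e(2) by (simp add: mult.assoc)
  also have "leavitt_eq G \<dots> (path_star (head G e) q * gm (LG e))"
    by (rule leavitt_eq_mult_left[OF leavitt_eq_of_rel[OF leavitt_rels.gs[OF e(1)]]])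
  also have "leavitt_eq G \<dots> (path_star u p)" by (rule leavitt_eq_sym[OF ps])
  finally show ?thesis .
qed

lemma ghost_mult_path_mon:
  assumes "awalk u (a # p) w" "e \<in> arcs G"
  shows "leavitt_eq G (gm (LG e) * path_mon u (a # p)) (if e = a then path_mon (head G a) p else 0)"
proof -
  from assms(1) have a: "a \<in> arcs G" "awalk (head G a) p w" by (auto simp: awalk_Cons_iff)
  have "leavitt_eq G (gm (LG e) * path_mon u (a # p)) (gm (LG e) * gm (LE a) * path_mon (head G a) p)"
    using leavitt_eq_mult_left[OF path_mon_Cons[OF assms(1)]] by (simp add: mult.assoc)
  also have "leavitt_eq G \<dots> ((if e = a then gm (LV (head G e)) else 0) * path_mon (head G a) p)"
    by (rule leavitt_eq_mult_right[OF leavitt_eq_of_rel[OF leavitt_rels.ck1[OF assms(2) a(1)]]])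
  also have "leavitt_eq G \<dots> (if e = a then path_mon (head G a) p else 0)"
    using vertex_mult_path_mon[OF a(2)] by auto
  finally show ?thesis .
qed

lemma path_star_mult_edge:
  assumes "awalk u (b # q) w" "f \<in> arcs G"
  shows "leavitt_eq G (path_star u (b # q) * gm (LE f)) (if f = b then path_star (head G b) q else 0)"
proof -
  from assms(1) have b: "b \<in> arcs G" "awalk (head G b) q w" by (auto simp: awalk_Cons_iff)
  have "leavitt_eq G (path_star u (b # q) * gm (LE f)) (path_star (head G b) q * (gm (LG b) * gm (LE f)))"
    using leavitt_eq_mult_right[OF path_star_Cons[OF assms(1)]] by (simp add: mult.assoc)
  also have "leavitt_eq G \<dots> (path_star (head G b) q * (if b = f then gm (LV (head G b)) else 0))"
    by (rule leavitt_eq_mult_left[OF leavitt_eq_of_rel[OF leavitt_rels.ck1[OF b(1) assms(2)]]])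
  also have "leavitt_eq G \<dots> (if f = b then path_star (head G b) q else 0)"
    using path_star_mult_vertex[OF b(2)] by auto
  finally show ?thesis .
qed

lemma edge_mult_path_mon:
  assumes "awalk u p w" "e \<in> arcs G"
  shows "leavitt_eq G (gm (LE e) * path_mon u p) (if head G e = u then path_mon (tail G e) (e # p) else 0)"
proof (cases "head G e = u")
  case True
  with assms have "awalk (tail G e) (e # p) w" by (simp add: awalk_Cons_iff)
  from leavitt_eq_sym[OF path_mon_Cons[OF this]] True show ?thesis by simp
next
  case False
  have "leavitt_eq G (gm (LE e) * path_mon u p) (gm (LE e) * gm (LV u) * path_mon u p)"
    using leavitt_eq_mult_left[OF leavitt_eq_sym[OF vertex_mult_path_mon[OF assms(1)]]]
    by (simp add: mult.assoc)
  also have "leavitt_eq G \<dots> (0 * path_mon u p)"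
    using edge_mult_vertex[OF awalk_hd_in_verts[OF assms(1)] assms(2)] False
    by (intro leavitt_eq_mult_right) auto
  finally show ?thesis using False by simp
qed

lemma path_star_mult_ghost:
  assumes "awalk u p w" "f \<in> arcs G"
  shows "leavitt_eq G (path_star u p * gm (LG f)) (if head G f = u then path_star (tail G f) (f # p) else 0)"
proof (cases "head G f = u")
  case True
  with assms have "awalk (tail G f) (f # p) w" by (simp add: awalk_Cons_iff)
  from leavitt_eq_sym[OF path_star_Cons[OF this]] True show ?thesis by simp
next
  case False
  have "leavitt_eq G (path_star u p * gm (LG f)) (path_star u p * (gm (LV u) * gm (LG f)))"
    using leavitt_eq_mult_right[OF leavitt_eq_sym[OF path_star_mult_vertex[OF assms(1)]]]
    by (simp add: mult.assoc)
  also have "leavitt_eq G \<dots> (path_star u p * 0)"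
    using vertex_mult_ghost[OF awalk_hd_in_verts[OF assms(1)] assms(2)] False
    by (intro leavitt_eq_mult_left) auto
  finally show ?thesis using False by simp
qed

lemma inC_zero_ghost_mult_edge:
  assumes "e \<in> arcs G" "f \<in> arcs G"
  shows "inC G 0 (scal c * gm (LG e) * gm (LE f))"
proof -
  let ?h = "head G e"
  have "inC G 0 (scal c * gm (LV ?h))"
  proof -
    have "awalk ?h [] ?h" using assms(1) by (simp add: awalk_Nil_iff)
    then have "inC G 0 (scal c * path_mon ?h [] * path_star ?h [])" by (intro inC_monomial) auto
    moreover have "leavitt_eq G (scal c * gm (LV ?h)) (scal c * path_mon ?h [] * path_star ?h [])"
      using leavitt_eq_mult_left[OF leavitt_eq_sym[OF vertex_idem[OF head_in_verts[OF assms(1)]]]]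
      by (simp add: path_mon_def path_star_def mult.assoc)
    ultimately show ?thesis by (rule inC_leavitt_eq)
  qed
  then have "inC G 0 (scal c * (if e = f then gm (LV ?h) else 0))"
    by (cases "e = f") (simp_all add: inC_zero)
  moreover have "leavitt_eq G (scal c * gm (LG e) * gm (LE f)) (scal c * (if e = f then gm (LV ?h) else 0))"
    using leavitt_eq_mult_left[OF leavitt_eq_of_rel[OF leavitt_rels.ck1[OF assms]], where x = "scal c"]
    by (simp add: mult.assoc)
  ultimately show ?thesis by (rule inC_leavitt_eq)
qed

(* For k = 0 the truncated level k - 1 = 0 is still right: e^* v w f is 0 or e^* f, i.e. 0 or r(e). *)
lemma inC_ghost_mult_monomial_mult_edge:
  assumes "awalk u1 a v1" "awalk u2 b v2" "length a = k" "length b = k" "e \<in> arcs G" "f \<in> arcs G"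
  shows "inC G (k - 1) (gm (LG e) * (scal c * path_mon u1 a * path_star u2 b) * gm (LE f))"
proof -
  have eq: "gm (LG e) * (scal c * path_mon u1 a * path_star u2 b) * gm (LE f)
    = scal c * ((gm (LG e) * path_mon u1 a) * (path_star u2 b * gm (LE f)))"
    by (simp add: gm_mult_scal mult.assoc)
  show ?thesis
  proof (cases k)
    case 0
    with assms have ab: "a = []" "b = []" and u: "u1 \<in> verts G" "u2 \<in> verts G"
      by (auto simp: awalk_Nil_iff)
    have "leavitt_eq G (scal c * ((gm (LG e) * path_mon u1 a) * (path_star u2 b * gm (LE f))))
      (scal c * ((if u1 = tail G e then gm (LG e) else 0) * (if u2 = tail G f then gm (LE f) else 0)))"
      using ghost_mult_vertex[OF u(1) assms(5)] vertex_mult_edge[OF u(2) assms(6)] ab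
      by (intro leavitt_eq_mult_left leavitt_eq_mult) (simp_all add: path_mon_def path_star_def)
    moreover have "inC G 0 (scal c * ((if u1 = tail G e then gm (LG e) else 0) *
        (if u2 = tail G f then gm (LE f) else 0)))"
      by (rule inC_scal_mult_if) (rule inC_zero_ghost_mult_edge[OF assms(5,6)])
    ultimately show ?thesis using eq 0 by (simp add: inC_leavitt_eq)
  next
    case (Suc k')
    with assms obtain a1 a' b1 b' where ab: "a = a1 # a'" "b = b1 # b'"
      by (cases a; cases b) auto
    with assms have aw': "awalk (head G a1) a' v1" "awalk (head G b1) b' v2"
      by (auto simp: awalk_Cons_iff)
    have "leavitt_eq G (scal c * ((gm (LG e) * path_mon u1 a) * (path_star u2 b * gm (LE f))))
      (scal c * ((if e = a1 then path_mon (head G a1) a' else 0) *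
        (if f = b1 then path_star (head G b1) b' else 0)))"
      using ghost_mult_path_mon[of u1 a1 a' v1 e] path_star_mult_edge[of u2 b1 b' v2 f] assms ab
      by (intro leavitt_eq_mult_left leavitt_eq_mult) simp_all
    moreover have "inC G k' (scal c * ((if e = a1 then path_mon (head G a1) a' else 0) *
        (if f = b1 then path_star (head G b1) b' else 0)))"
      by (rule inC_scal_mult_if, rule inC_monomial[OF aw']) (use assms ab Suc in auto)
    ultimately show ?thesis using eq Suc by (simp add: inC_leavitt_eq)
  qed
qed

lemma inC_edge_mult_monomial_mult_ghost:
  assumes "awalk u1 a v1" "awalk u2 b v2" "length a = k" "length b = k" "e \<in> arcs G" "f \<in> arcs G"
  shows "inC G (Suc k) (gm (LE e) * (scal c * path_mon u1 a * path_star u2 b) * gm (LG f))"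
proof -
  have eq: "gm (LE e) * (scal c * path_mon u1 a * path_star u2 b) * gm (LG f)
    = scal c * ((gm (LE e) * path_mon u1 a) * (path_star u2 b * gm (LG f)))"
    by (simp add: gm_mult_scal mult.assoc)
  have "leavitt_eq G (scal c * ((gm (LE e) * path_mon u1 a) * (path_star u2 b * gm (LG f))))
     (scal c * ((if head G e = u1 then path_mon (tail G e) (e # a) else 0) *
                (if head G f = u2 then path_star (tail G f) (f # b) else 0)))"
    using edge_mult_path_mon[OF assms(1,5)] path_star_mult_ghost[OF assms(2,6)]
    by (intro leavitt_eq_mult_left leavitt_eq_mult)
  moreover have "inC G (Suc k) (scal c * ((if head G e = u1 then path_mon (tail G e) (e # a) else 0) *
                (if head G f = u2 then path_star (tail G f) (f # b) else 0)))"
  proof (rule inC_scal_mult_if)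
    assume "head G e = u1" "head G f = u2"
    with assms have "awalk (tail G e) (e # a) v1" "awalk (tail G f) (f # b) v2"
      by (auto simp: awalk_Cons_iff)
    then show "inC G (Suc k) (scal c * path_mon (tail G e) (e # a) * path_star (tail G f) (f # b))"
      by (rule inC_monomial) (use assms in auto)
  qed
  ultimately show ?thesis using eq by (simp add: inC_leavitt_eq)
qed

lemma inC_ghost_mult_edge:
  "inC G k x \<Longrightarrow> e \<in> arcs G \<Longrightarrow> f \<in> arcs G \<Longrightarrow> inC G (k - 1) (gm (LG e) * x * gm (LE f))"
  by (erule inC_mult_both_sides) (blast intro: inC_ghost_mult_monomial_mult_edge)

lemma inC_edge_mult_ghost:
  "inC G k x \<Longrightarrow> e \<in> arcs G \<Longrightarrow> f \<in> arcs G \<Longrightarrow> inC G (Suc k) (gm (LE e) * x * gm (LG f))"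
  by (erule inC_mult_both_sides) (blast intro: inC_edge_mult_monomial_mult_ghost)

end

section \<open>Decomposition through the idempotents \<open>e e\<^sup>*\<close>\<close>

definition edge_projection :: "'e set \<Rightarrow> ('r::ring_1, 'v, 'e) freealg" where
  "edge_projection F = (\<Sum>e\<in>F. gm (LE e) * gm (LG e))"

lemma scal_mult_edge_projection: "scal c * edge_projection F = edge_projection F * scal c"
  by (simp add: edge_projection_def gm_def mult_single sum_distrib_left sum_distrib_right
      scal_mult_single_commute)

lemma edge_projection_sandwich:
  "edge_projection F * x * edge_projection F =
   (\<Sum>e\<in>F. \<Sum>f\<in>F. gm (LE e) * (gm (LG e) * x * gm (LE f)) * gm (LG f))"
  by (simp add: edge_projection_def sum_distrib_left sum_distrib_right mult.assoc) (rule sum.swap)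

context wf_digraph
begin

lemma edge_projection_mult_path_mon:
  assumes "finite F" "F \<subseteq> arcs G" "a \<in> F" "awalk u (a # p) w"
  shows "leavitt_eq G (edge_projection F * path_mon u (a # p)) (path_mon u (a # p))"
proof -
  have "edge_projection F * path_mon u (a # p) = (\<Sum>e\<in>F. gm (LE e) * (gm (LG e) * path_mon u (a # p)))"
    by (simp add: edge_projection_def sum_distrib_right mult.assoc)
  also have "leavitt_eq G \<dots> (\<Sum>e\<in>F. gm (LE e) * (if e = a then path_mon (head G a) p else 0))"
    using assms(2,4) by (intro leavitt_eq_sum leavitt_eq_mult_left ghost_mult_path_mon) auto
  also have "\<dots> = gm (LE a) * path_mon (head G a) p"
    using assms(1,3) by (simp add: if_distrib cong: if_cong)
  also have "leavitt_eq G \<dots> (path_mon u (a # p))"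
    by (rule leavitt_eq_sym[OF path_mon_Cons[OF assms(4)]])
  finally show ?thesis .
qed

lemma path_star_mult_edge_projection:
  assumes "finite F" "F \<subseteq> arcs G" "b \<in> F" "awalk u (b # q) w"
  shows "leavitt_eq G (path_star u (b # q) * edge_projection F) (path_star u (b # q))"
proof -
  have "path_star u (b # q) * edge_projection F = (\<Sum>f\<in>F. (path_star u (b # q) * gm (LE f)) * gm (LG f))"
    by (simp add: edge_projection_def sum_distrib_left mult.assoc)
  also have "leavitt_eq G \<dots> (\<Sum>f\<in>F. (if f = b then path_star (head G b) q else 0) * gm (LG f))"
    using assms(2,4) by (intro leavitt_eq_sum leavitt_eq_mult_right path_star_mult_edge) auto
  also have "\<dots> = path_star (head G b) q * gm (LG b)"
    using assms(1,3) by (simp add: if_distrib if_distribR cong: if_cong)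
  also have "leavitt_eq G \<dots> (path_star u (b # q))"
    by (rule leavitt_eq_sym[OF path_star_Cons[OF assms(4)]])
  finally show ?thesis .
qed

lemma edge_projection_sandwich_monomial:
  assumes "finite F" "F \<subseteq> arcs G" "a \<in> F" "b \<in> F" "awalk u1 (a # p) v1" "awalk u2 (b # q) v2"
  shows "leavitt_eq G
    (edge_projection F * (scal c * path_mon u1 (a # p) * path_star u2 (b # q)) * edge_projection F)
    (scal c * path_mon u1 (a # p) * path_star u2 (b # q))"
proof -
  have "edge_projection F * (scal c * path_mon u1 (a # p) * path_star u2 (b # q)) * edge_projection F
    = scal c * (edge_projection F * path_mon u1 (a # p)) * (path_star u2 (b # q) * edge_projection F)"
    by (simp add: mult.assoc[symmetric] scal_mult_edge_projection)
  also have "leavitt_eq G \<dots> (scal c * path_mon u1 (a # p) * path_star u2 (b # q))"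
    by (rule leavitt_eq_mult[OF leavitt_eq_mult_left[OF edge_projection_mult_path_mon[OF assms(1-3,5)]]
          path_star_mult_edge_projection[OF assms(1,2,4,6)]])
  finally show ?thesis .
qed

lemma Cspan_Suc_edge_projection:
  assumes "y \<in> Cspan G (Suc k)"
  shows "\<exists>F. finite F \<and> F \<subseteq> arcs G \<and> (\<forall>F'. finite F' \<and> F \<subseteq> F' \<and> F' \<subseteq> arcs G \<longrightarrow>
           leavitt_eq G (edge_projection F' * y * edge_projection F') y)"
  using assms
proof (induction rule: Cspan.induct)
  case zero
  show ?case by (intro exI[of _ "{}"]) simp
next
  case (add u1 a v1 u2 b v2 y c)
  then obtain F where F: "finite F" "F \<subseteq> arcs G"
    and IH: "\<And>F'. finite F' \<and> F \<subseteq> F' \<and> F' \<subseteq> arcs G \<Longrightarrow>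
      leavitt_eq G (edge_projection F' * y * edge_projection F') y"
    by blast
  from add.hyps(3,4) obtain a1 a' b1 b' where ab: "a = a1 # a'" "b = b1 # b'"
    by (cases a; cases b) auto
  with add.hyps(1,2) have arcs: "a1 \<in> arcs G" "b1 \<in> arcs G" by (auto simp: awalk_Cons_iff)
  show ?case
  proof (intro exI[of _ "insert a1 (insert b1 F)"] conjI allI impI)
    fix F' assume F': "finite F' \<and> insert a1 (insert b1 F) \<subseteq> F' \<and> F' \<subseteq> arcs G"
    let ?m = "scal c * path_mon u1 a * path_star u2 b"
    have "leavitt_eq G (edge_projection F' * ?m * edge_projection F' + edge_projection F' * y * edge_projection F')
        (?m + y)"
      using edge_projection_sandwich_monomial[of F' a1 b1 u1 a' v1 u2 b' v2 c] add.hyps(1,2) ab F' F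
      by (intro leavitt_eq_add IH) auto
    then show "leavitt_eq G (edge_projection F' * (?m + y) * edge_projection F') (?m + y)"
      by (simp add: distrib_left distrib_right)
  qed (use F arcs in auto)
qed

lemma inC_Suc_decompose:
  assumes "inC G (Suc k) x"
  obtains F where "finite F" "F \<subseteq> arcs G"
    "leavitt_eq G x (\<Sum>e\<in>F. \<Sum>f\<in>F. gm (LE e) * (gm (LG e) * x * gm (LE f)) * gm (LG f))"
proof -
  obtain y where y: "y \<in> Cspan G (Suc k)" "leavitt_eq G x y"
    using assms unfolding inC_def leavitt_eq_def by blast
  obtain F where F: "finite F" "F \<subseteq> arcs G" "leavitt_eq G (edge_projection F * y * edge_projection F) y"
    using Cspan_Suc_edge_projection[OF y(1)] by blast
  note y(2)
  also note leavitt_eq_sym[OF F(3)]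
  also have "leavitt_eq G (edge_projection F * y * edge_projection F) (edge_projection F * x * edge_projection F)"
    using leavitt_eq_sym[OF y(2)] by (intro leavitt_eq_mult_left leavitt_eq_mult_right)
  finally show ?thesis using F(1,2) that by (simp add: edge_projection_sandwich)
qed

lemma inC_Suc_if_peeled:
  assumes "inC G (Suc k) x"
    and "\<And>e f. e \<in> arcs G \<Longrightarrow> f \<in> arcs G \<Longrightarrow> inC G j (gm (LG e) * x * gm (LE f))"
  shows "inC G (Suc j) x"
proof -
  obtain F where F: "finite F" "F \<subseteq> arcs G"
    and x: "leavitt_eq G x (\<Sum>e\<in>F. \<Sum>f\<in>F. gm (LE e) * (gm (LG e) * x * gm (LE f)) * gm (LG f))"
    using inC_Suc_decompose[OF assms(1)] by blast
  have "inC G (Suc j) (\<Sum>e\<in>F. \<Sum>f\<in>F. gm (LE e) * (gm (LG e) * x * gm (LE f)) * gm (LG f))"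
    using F(2) assms(2) by (blast intro: inC_sum inC_edge_mult_ghost)
  then show ?thesis using x by (rule inC_leavitt_eq)
qed

lemma inC_between:
  "inC G m x \<Longrightarrow> inC G n x \<Longrightarrow> m \<le> j \<Longrightarrow> j \<le> n \<Longrightarrow> inC G j x"
proof (induction n arbitrary: x m j)
  case (Suc n)
  show ?case
  proof (cases "j = m")
    case False
    with Suc.prems obtain j' where j: "j = Suc j'" "m - 1 \<le> j'" "j' \<le> n" by (cases j) auto
    have "inC G j' (gm (LG e) * x * gm (LE f))" if "e \<in> arcs G" "f \<in> arcs G" for e f
    proof -
      have "inC G n (gm (LG e) * x * gm (LE f))"
        using inC_ghost_mult_edge[OF Suc.prems(2) that] by simp
      with inC_ghost_mult_edge[OF Suc.prems(1) that] show ?thesis using Suc.IH j(2,3) by blast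
    qed
    with Suc.prems(2) show ?thesis unfolding j(1) by (rule inC_Suc_if_peeled)
  qed (use Suc.prems in simp)
qed simp

lemma inC_Suc_le_step:
  assumes "inC G (Suc k) \<le> (inC G k :: ('r::ring_1, 'a, 'b) freealg \<Rightarrow> bool)"
  shows "inC G (Suc (Suc k)) \<le> (inC G (Suc k) :: ('r, 'a, 'b) freealg \<Rightarrow> bool)"
proof (rule predicate1I)
  fix x :: "('r, 'a, 'b) freealg"
  assume x: "inC G (Suc (Suc k)) x"
  show "inC G (Suc k) x"
  proof (rule inC_Suc_if_peeled[OF x])
    fix e f assume "e \<in> arcs G" "f \<in> arcs G"
    with inC_ghost_mult_edge[OF x] have "inC G (Suc k) (gm (LG e) * x * gm (LE f))" by simp
    with assms show "inC G k (gm (LG e) * x * gm (LE f))" by (rule predicate1D)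
  qed
qed

lemma inC_le_of_Suc_le:
  assumes "inC G (Suc t) \<le> (inC G t :: ('r::ring_1, 'a, 'b) freealg \<Rightarrow> bool)" and "t \<le> n"
  shows "inC G n \<le> (inC G t :: ('r, 'a, 'b) freealg \<Rightarrow> bool)"
proof -
  have Suc_le: "inC G (Suc m) \<le> (inC G m :: ('r, 'a, 'b) freealg \<Rightarrow> bool)" if "t \<le> m" for m
    using that by (induction m rule: dec_induct) (use assms(1) inC_Suc_le_step in auto)
  from assms(2) show ?thesis
  proof (induction n rule: dec_induct)
    case (step m)
    show ?case by (rule order_trans[OF Suc_le[OF step.hyps(1)] step.IH])
  qed simp
qed

end

theorem lemma4p4:
  fixes G :: "('v, 'e) pre_digraph" and t :: nat
  assumes "wf_digraph G"
    and "\<forall>x :: ('r::ring_1, 'v, 'e) freealg. inC G (t + 1) x \<longrightarrow> (\<exists>m \<le> t. inC G m x)"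
  shows "\<forall>x :: ('r, 'v, 'e) freealg. (\<exists>m. inC G m x) \<longleftrightarrow> (\<exists>m \<le> t. inC G m x)"
proof -
  interpret wf_digraph G by (rule assms(1))
  have Suc_t: "inC G (Suc t) \<le> (inC G t :: ('r, 'v, 'e) freealg \<Rightarrow> bool)"
  proof (rule predicate1I)
    fix x :: "('r, 'v, 'e) freealg"
    assume x: "inC G (Suc t) x"
    with assms(2) obtain m where "m \<le> t" "inC G m x" by auto
    with x show "inC G t x" by (intro inC_between[of m x "Suc t" t]) auto
  qed
  have "inC G t x" if "inC G m x" "t \<le> m" for m and x :: "('r, 'v, 'e) freealg"
    using inC_le_of_Suc_le[OF Suc_t that(2)] that(1) by (rule predicate1D)
  then show ?thesis by (metis nle_le)
qed

end
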